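(* Let $V\in(\mathbb{R}\cup\{-\infty\})^{n\times p}$ have no row and no column identically $-\infty$, and suppose each column of $V$ has at least two finite entries. Consider the game $\Gamma$ defined below. The following are equivalent: (1) there are disjoint dominions for the two players in $\Gamma$; (2) there exist nonempty subsets $I,J\subset[n]$ with $I\cup J=[n]$, $I\cap J=\emptyset$, such that some columns of $V$ have support included in $I$, and the other columns of $V$ have at least two finite entries in $J$; (3) there exists $K\subset[p]$ with $K\neq\emptyset$, $K\neq[p]$, such that, denoting by $I_K$ the union of the supports of the columns of $V$ indexed by $K$, every column not in $K$ has at least two finite entries outside $I_K$. Moreover, in case (3), $I_K$ and $[n]\setminus I_K$ are disjoint dominions of players Min and Max respectively.
   Context: Support of a column: set of indices of its finite entries. Let $E=\{(i,k):V_{ik}\neq-\infty\}$. The game $\Gamma$ is a repeated two-player game with states $[n]$: at state $i$, player Min chooses a column $k$ with $(i,k)\in E$, then player Max chooses $j\in[n]$ with $j\neq i$ and $(j,k)\in E$, and the game moves to state $j$ (Min pays $-V_{ik}$ and then $V_{jk}$ to Max; payments are irrelevant here). A dominion of a player is a nonempty set $I\subset[n]$ such that this player has a policy ensuring that, from any initial state in $I$ and whatever the other player does, all states visited (at Min's turns) remain in $I$. *)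

theory Defs
  imports "HOL-Library.Extended_Real"
begin

text \<open>Matrix V with entries in R \<union> {-\<infinity>} (ereal, with +\<infinity> excluded by assumption),
  rows indexed by {..<n}, columns by {..<p}.\<close>

definition supp :: "(nat \<Rightarrow> nat \<Rightarrow> ereal) \<Rightarrow> nat \<Rightarrow> nat \<Rightarrow> nat set" where
  "supp V n k = {i. i < n \<and> V i k \<noteq> -\<infinity>}"

definition inE :: "(nat \<Rightarrow> nat \<Rightarrow> ereal) \<Rightarrow> nat \<Rightarrow> nat \<Rightarrow> nat \<Rightarrow> nat \<Rightarrow> bool" where
  "inE V n p i k \<longleftrightarrow> i < n \<and> k < p \<and> V i k \<noteq> -\<infinity>"

text \<open>Plays: states x 0, x 1, ... and Min's columns c 0, c 1, ...  At turn s Min chooses c s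
  with (x s, c s) in E, then Max chooses x (s+1) \<noteq> x s with (x (s+1), c s) in E.  A Min policy maps (states x0..xs, columns c0..c(s-1))
  to a column; a Max policy maps (states x0..xs, columns c0..cs) to a state.
  Dominion: from every initial state in I, against every behaviour of the opponent,
  every finite play prefix consistent with the policy is legal for the policy owner and all
  states visited stay in I.\<close>

definition min_dominion :: "(nat \<Rightarrow> nat \<Rightarrow> ereal) \<Rightarrow> nat \<Rightarrow> nat \<Rightarrow> nat set \<Rightarrow> bool" where
  "min_dominion V n p I \<longleftrightarrow> I \<noteq> {} \<and> I \<subseteq> {..<n} \<and>
    (\<exists>\<sigma> :: nat list \<Rightarrow> nat list \<Rightarrow> nat. \<forall>T (x :: nat \<Rightarrow> nat) (c :: nat \<Rightarrow> nat).
       x 0 \<in> I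
       \<and> (\<forall>s\<le>T. c s = \<sigma> (map x [0..<Suc s]) (map c [0..<s]))
       \<and> (\<forall>s<T. x (Suc s) \<noteq> x s \<and> inE V n p (x (Suc s)) (c s))
       \<longrightarrow> (\<forall>s\<le>T. x s \<in> I \<and> inE V n p (x s) (c s)))"

definition max_dominion :: "(nat \<Rightarrow> nat \<Rightarrow> ereal) \<Rightarrow> nat \<Rightarrow> nat \<Rightarrow> nat set \<Rightarrow> bool" where
  "max_dominion V n p I \<longleftrightarrow> I \<noteq> {} \<and> I \<subseteq> {..<n} \<and>
    (\<exists>\<tau> :: nat list \<Rightarrow> nat list \<Rightarrow> nat. \<forall>T (x :: nat \<Rightarrow> nat) (c :: nat \<Rightarrow> nat).
       x 0 \<in> I
       \<and> (\<forall>s<T. inE V n p (x s) (c s) \<and> x (Suc s) = \<tau> (map x [0..<Suc s]) (map c [0..<Suc s]))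
       \<longrightarrow> (\<forall>s<T. x (Suc s) \<noteq> x s \<and> inE V n p (x (Suc s)) (c s) \<and> x (Suc s) \<in> I))"

end

theory Submission
  imports Defs
begin

text \<open>Both kinds of dominion admit a local description, witnessed by positional policies.
  A set \<open>I\<close> is a dominion of Min iff every state of \<open>I\<close> lies in the support of some
  column whose whole support is contained in \<open>I\<close> (Min plays that column, and any reply
  of Max stays in \<open>I\<close>); a set \<open>J\<close> is a dominion of Max iff every column whose
  support meets \<open>J\<close> has at least two finite entries in \<open>J\<close> (Max can then always
  answer inside \<open>J\<close> with a state different from the current one). With these
  descriptions, (1) yields (2) by taking \<open>J\<close> and its complement, and the columns whose
  support avoids \<open>J\<close>; (2) yields (3) for the same \<open>K\<close>, where \<open>K \<noteq> [p]\<close> because the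
  rows meeting \<open>J\<close> are not identically \<open>-\<infinity>\<close>; and in (3) the union \<open>I\<^sub>K\<close> of the supports
  in \<open>K\<close> and its complement satisfy the two descriptions.\<close>

lemma finite_supp: "finite (supp V n k)"
  by (rule finite_subset[of _ "{..<n}"]) (auto simp: supp_def)

lemma inE_iff_supp: "inE V n p i k \<longleftrightarrow> k < p \<and> i \<in> supp V n k"
  by (auto simp: inE_def supp_def)

lemma two_le_card_iff_other:
  assumes "finite A" "a \<in> A"
  shows "2 \<le> card A \<longleftrightarrow> (\<exists>b\<in>A. b \<noteq> a)"
proof -
  have "2 \<le> card A \<longleftrightarrow> \<not> card A \<le> Suc 0" by linarith
  then show ?thesis using assms by (auto simp: card_le_Suc0_iff_eq) metis
qed

lemma min_dominion_closed_column:
  assumes "min_dominion V n p I" "i \<in> I"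
  obtains k where "k < p" "i \<in> supp V n k" "supp V n k \<subseteq> I"
proof -
  from assms(1) obtain \<sigma> where \<sigma>: "\<forall>T (x :: nat \<Rightarrow> nat) (c :: nat \<Rightarrow> nat).
       x 0 \<in> I
       \<and> (\<forall>s\<le>T. c s = \<sigma> (map x [0..<Suc s]) (map c [0..<s]))
       \<and> (\<forall>s<T. x (Suc s) \<noteq> x s \<and> inE V n p (x (Suc s)) (c s))
       \<longrightarrow> (\<forall>s\<le>T. x s \<in> I \<and> inE V n p (x s) (c s))"
    unfolding min_dominion_def by blast
  define k where "k = \<sigma> [i] []"
  have ik: "inE V n p i k"
    using \<sigma>[rule_format, where T=0 and x="\<lambda>_. i" and c="\<lambda>_. k"] assms(2) by (simp add: k_def)
  have "j \<in> I" if j: "j \<in> supp V n k" "j \<noteq> i" for j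
  proof -
    define x where "x = (\<lambda>s::nat. if s = 0 then i else j)"
    define c where "c = (\<lambda>s::nat. if s = 0 then k else \<sigma> [i, j] [k])"
    have "\<forall>s\<le>1. c s = \<sigma> (map x [0..<Suc s]) (map c [0..<s])"
      by (auto simp: le_Suc_eq x_def c_def k_def)
    moreover have "\<forall>s<1. x (Suc s) \<noteq> x s \<and> inE V n p (x (Suc s)) (c s)"
      using j ik by (simp add: x_def c_def inE_iff_supp)
    moreover have "x 0 \<in> I" using assms(2) by (simp add: x_def)
    ultimately have "x 1 \<in> I" using \<sigma> by blast
    then show ?thesis by (simp add: x_def)
  qed
  with assms(2) ik show thesis
    by (intro that[of k]) (auto simp: inE_iff_supp)
qed

lemma min_dominionI:
  assumes "I \<noteq> {}" "I \<subseteq> {..<n}"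
    and closed: "\<forall>i\<in>I. \<exists>k<p. i \<in> supp V n k \<and> supp V n k \<subseteq> I"
  shows "min_dominion V n p I"
proof -
  define \<sigma> where "\<sigma> = (\<lambda>xs (cs :: nat list). SOME k. k < p \<and> last xs \<in> supp V n k \<and> supp V n k \<subseteq> I)"
  have \<sigma>: "\<sigma> xs cs < p \<and> last xs \<in> supp V n (\<sigma> xs cs) \<and> supp V n (\<sigma> xs cs) \<subseteq> I"
    if "last xs \<in> I" for xs cs
    unfolding \<sigma>_def by (rule someI_ex) (use that closed in blast)
  have "\<forall>s\<le>T. x s \<in> I \<and> inE V n p (x s) (c s)"
    if x0: "x 0 \<in> I"
      and play: "\<forall>s\<le>T. c s = \<sigma> (map x [0..<Suc s]) (map c [0..<s])"
      and moves: "\<forall>s<T. x (Suc s) \<noteq> x s \<and> inE V n p (x (Suc s)) (c s)"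
    for T x c
  proof -
    have column: "c s < p \<and> x s \<in> supp V n (c s) \<and> supp V n (c s) \<subseteq> I"
      if "s \<le> T" "x s \<in> I" for s
      using \<sigma>[of "map x [0..<Suc s]" "map c [0..<s]"] play that by simp
    have state: "x s \<in> I" if "s \<le> T" for s
      using that
    proof (induction s)
      case 0
      show ?case by (fact x0)
    next
      case (Suc s)
      then have "supp V n (c s) \<subseteq> I" using column by simp
      moreover have "x (Suc s) \<in> supp V n (c s)" using moves Suc.prems by (simp add: inE_iff_supp)
      ultimately show ?case by blast
    qed
    show ?thesis using column state by (simp add: inE_iff_supp)
  qed
  then show ?thesis
    unfolding min_dominion_def using assms(1,2) by blast
qed

lemma min_dominion_iff:
  "min_dominion V n p I \<longleftrightarrow>
     I \<noteq> {} \<and> I \<subseteq> {..<n} \<and> (\<forall>i\<in>I. \<exists>k<p. i \<in> supp V n k \<and> supp V n k \<subseteq> I)"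
  by (metis min_dominionI min_dominion_closed_column min_dominion_def)

lemma max_dominion_two_in_touching_column:
  assumes "max_dominion V n p J" "k < p" "supp V n k \<inter> J \<noteq> {}"
  shows "2 \<le> card (supp V n k \<inter> J)"
proof -
  from assms(1) obtain \<tau> where \<tau>: "\<forall>T (x :: nat \<Rightarrow> nat) (c :: nat \<Rightarrow> nat).
       x 0 \<in> J
       \<and> (\<forall>s<T. inE V n p (x s) (c s) \<and> x (Suc s) = \<tau> (map x [0..<Suc s]) (map c [0..<Suc s]))
       \<longrightarrow> (\<forall>s<T. x (Suc s) \<noteq> x s \<and> inE V n p (x (Suc s)) (c s) \<and> x (Suc s) \<in> J)"
    unfolding max_dominion_def by blast
  from assms(3) obtain j where j: "j \<in> supp V n k \<inter> J" by blast
  define x where "x = (\<lambda>s::nat. if s = 0 then j else \<tau> [j] [k])"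
  have "\<forall>s<1. inE V n p (x s) k \<and> x (Suc s) = \<tau> (map x [0..<Suc s]) (map (\<lambda>_. k) [0..<Suc s])"
    using j assms(2) by (simp add: x_def inE_iff_supp)
  then have "x 1 \<noteq> x 0 \<and> inE V n p (x 1) k \<and> x 1 \<in> J"
    using \<tau>[rule_format, where T=1 and x=x and c="\<lambda>_. k"] j by (simp add: x_def)
  then have "\<exists>j'\<in>supp V n k \<inter> J. j' \<noteq> j"
    by (auto simp: x_def inE_iff_supp)
  then show ?thesis
    using two_le_card_iff_other[OF _ j] finite_supp by blast
qed

lemma max_dominionI:
  assumes "J \<noteq> {}" "J \<subseteq> {..<n}"
    and two: "\<forall>k<p. supp V n k \<inter> J \<noteq> {} \<longrightarrow> 2 \<le> card (supp V n k \<inter> J)"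
  shows "max_dominion V n p J"
proof -
  define \<tau> where "\<tau> = (\<lambda>xs cs. SOME j. j \<in> supp V n (last cs) \<inter> J \<and> j \<noteq> last xs)"
  have \<tau>: "\<tau> xs cs \<in> supp V n (last cs) \<inter> J \<and> \<tau> xs cs \<noteq> last xs"
    if "last cs < p" "last xs \<in> supp V n (last cs) \<inter> J" for xs cs
  proof -
    have "2 \<le> card (supp V n (last cs) \<inter> J)" using two that by blast
    then have "\<exists>j\<in>supp V n (last cs) \<inter> J. j \<noteq> last xs"
      using two_le_card_iff_other[OF _ that(2)] finite_supp by blast
    then show ?thesis unfolding \<tau>_def by (rule someI2_bex) blast
  qed
  have "\<forall>s<T. x (Suc s) \<noteq> x s \<and> inE V n p (x (Suc s)) (c s) \<and> x (Suc s) \<in> J"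
    if x0: "x 0 \<in> J"
      and play: "\<forall>s<T. inE V n p (x s) (c s) \<and> x (Suc s) = \<tau> (map x [0..<Suc s]) (map c [0..<Suc s])"
    for T x c
  proof -
    have step: "x (Suc s) \<noteq> x s \<and> inE V n p (x (Suc s)) (c s) \<and> x (Suc s) \<in> J"
      if "s < T" "x s \<in> J" for s
      using \<tau>[of "map c [0..<Suc s]" "map x [0..<Suc s]"] play that by (auto simp: inE_iff_supp)
    have state: "x s \<in> J" if "s \<le> T" for s
      using that
    proof (induction s)
      case 0
      show ?case by (fact x0)
    next
      case (Suc s)
      then show ?case using step by simp
    qed
    show ?thesis using step state by simp
  qed
  then show ?thesis
    unfolding max_dominion_def using assms(1,2) by blast
qed

lemma max_dominion_iff:
  "max_dominion V n p J \<longleftrightarrow>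
     J \<noteq> {} \<and> J \<subseteq> {..<n} \<and> (\<forall>k<p. supp V n k \<inter> J \<noteq> {} \<longrightarrow> 2 \<le> card (supp V n k \<inter> J))"
  by (metis max_dominionI max_dominion_two_in_touching_column max_dominion_def)

lemma dominions_imp_partition:
  assumes "min_dominion V n p I" "max_dominion V n p J" "I \<inter> J = {}"
  shows "\<exists>I J. I \<noteq> {} \<and> J \<noteq> {} \<and> I \<union> J = {..<n} \<and> I \<inter> J = {} \<and>
           (\<exists>K\<subseteq>{..<p}. K \<noteq> {} \<and> (\<forall>k\<in>K. supp V n k \<subseteq> I) \<and>
              (\<forall>k\<in>{..<p} - K. 2 \<le> card (supp V n k \<inter> J)))"
proof -
  define K where "K = {k. k < p \<and> supp V n k \<inter> J = {}}"
  from assms(1) obtain i where "i \<in> I" unfolding min_dominion_def by blast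
  with assms(1) obtain k where "k < p" "supp V n k \<subseteq> I"
    using min_dominion_closed_column by blast
  with assms(3) have "K \<noteq> {}" by (auto simp: K_def)
  moreover have "\<forall>k\<in>K. supp V n k \<subseteq> {..<n} - J" by (auto simp: K_def supp_def)
  moreover have "\<forall>k\<in>{..<p} - K. 2 \<le> card (supp V n k \<inter> J)"
    using assms(2) by (auto simp: K_def max_dominion_iff)
  moreover from assms(2) have "J \<noteq> {}" "J \<subseteq> {..<n}" by (simp_all add: max_dominion_iff)
  moreover have "{..<n} - J \<noteq> {}" using \<open>i \<in> I\<close> assms(1,3) by (auto simp: min_dominion_iff)
  moreover have "K \<subseteq> {..<p}" by (auto simp: K_def)
  ultimately show ?thesis
    by (intro exI[where x="{..<n} - J"] exI[where x=J]) blast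
qed

lemma partition_imp_column_set:
  assumes rows: "\<forall>i<n. \<exists>k<p. V i k \<noteq> -\<infinity>"
    and partition: "J \<noteq> {}" "I \<union> J = {..<n}" "I \<inter> J = {}"
    and columns: "\<forall>k\<in>K. supp V n k \<subseteq> I" "\<forall>k\<in>{..<p} - K. 2 \<le> card (supp V n k \<inter> J)"
  shows "K \<noteq> {..<p}" "\<forall>k\<in>{..<p} - K. 2 \<le> card (supp V n k - (\<Union>k'\<in>K. supp V n k'))"
proof -
  from partition obtain j where "j \<in> J" "j < n" by blast
  with rows obtain k where "k < p" "j \<in> supp V n k" by (auto simp: supp_def)
  with columns(1) partition(3) \<open>j \<in> J\<close> show "K \<noteq> {..<p}" by blast
  show "\<forall>k\<in>{..<p} - K. 2 \<le> card (supp V n k - (\<Union>k'\<in>K. supp V n k'))"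
  proof
    fix k assume "k \<in> {..<p} - K"
    have "supp V n k \<inter> J \<subseteq> supp V n k - (\<Union>k'\<in>K. supp V n k')" using columns(1) partition(3) by blast
    then have "card (supp V n k \<inter> J) \<le> card (supp V n k - (\<Union>k'\<in>K. supp V n k'))"
      by (intro card_mono) (simp_all add: finite_supp)
    moreover have "2 \<le> card (supp V n k \<inter> J)" using columns(2) \<open>k \<in> {..<p} - K\<close> by blast
    ultimately show "2 \<le> card (supp V n k - (\<Union>k'\<in>K. supp V n k'))" by linarith
  qed
qed

lemma column_cover_nonempty:
  assumes cols: "\<forall>k<p. \<exists>i<n. V i k \<noteq> -\<infinity>" and "K \<subseteq> {..<p}" "K \<noteq> {}"
  shows "(\<Union>k\<in>K. supp V n k) \<noteq> {}"
  using assms by (auto simp: supp_def)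

lemma column_set_dominions:
  assumes K: "K \<subseteq> {..<p}" "K \<noteq> {..<p}" "(\<Union>k\<in>K. supp V n k) \<noteq> {}"
    and two_outside: "\<forall>k\<in>{..<p} - K. 2 \<le> card (supp V n k - (\<Union>k'\<in>K. supp V n k'))"
  shows "min_dominion V n p (\<Union>k\<in>K. supp V n k)"
    and "max_dominion V n p ({..<n} - (\<Union>k\<in>K. supp V n k))"
proof -
  define U where "U = (\<Union>k\<in>K. supp V n k)"
  have "U \<noteq> {}" "U \<subseteq> {..<n}" using K(3) by (auto simp: U_def supp_def)
  moreover have "\<forall>i\<in>U. \<exists>k<p. i \<in> supp V n k \<and> supp V n k \<subseteq> U" using K(1) by (auto simp: U_def)
  ultimately show "min_dominion V n p U" by (simp add: min_dominion_iff)
  have two_outside_U: "\<forall>k\<in>{..<p} - K. 2 \<le> card (supp V n k - U)"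
    using two_outside by (simp add: U_def)
  have "\<forall>k<p. supp V n k \<inter> ({..<n} - U) \<noteq> {} \<longrightarrow> 2 \<le> card (supp V n k \<inter> ({..<n} - U))"
  proof (intro allI impI)
    fix k assume "k < p" "supp V n k \<inter> ({..<n} - U) \<noteq> {}"
    then have "k \<in> {..<p} - K" by (auto simp: U_def)
    moreover have "supp V n k \<inter> ({..<n} - U) = supp V n k - U" by (auto simp: supp_def)
    ultimately show "2 \<le> card (supp V n k \<inter> ({..<n} - U))" using two_outside_U by simp
  qed
  moreover from K(1,2) obtain k where "k \<in> {..<p} - K" by blast
  with two_outside_U have "2 \<le> card (supp V n k - U)" by blast
  then have "supp V n k - U \<noteq> {}" by (intro notI) simp
  then have "{..<n} - U \<noteq> {}" by (auto simp: supp_def)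
  ultimately show "max_dominion V n p ({..<n} - U)" by (simp add: max_dominion_iff)
qed

lemma column_set_imp_partition:
  assumes K: "K \<subseteq> {..<p}" "K \<noteq> {..<p}" "(\<Union>k\<in>K. supp V n k) \<noteq> {}"
    and two_outside: "\<forall>k\<in>{..<p} - K. 2 \<le> card (supp V n k - (\<Union>k'\<in>K. supp V n k'))"
  shows "\<exists>I J. I \<noteq> {} \<and> J \<noteq> {} \<and> I \<union> J = {..<n} \<and> I \<inter> J = {} \<and>
           (\<exists>K\<subseteq>{..<p}. K \<noteq> {} \<and> (\<forall>k\<in>K. supp V n k \<subseteq> I) \<and>
              (\<forall>k\<in>{..<p} - K. 2 \<le> card (supp V n k \<inter> J)))"
proof -
  define U where "U = (\<Union>k\<in>K. supp V n k)"
  from column_set_dominions[OF assms] have "U \<noteq> {}" "{..<n} - U \<noteq> {}"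
    by (simp_all add: U_def min_dominion_iff max_dominion_iff)
  moreover have "U \<union> ({..<n} - U) = {..<n}" by (auto simp: U_def supp_def)
  moreover have "U \<inter> ({..<n} - U) = {}" by blast
  moreover have "K \<noteq> {}" "\<forall>k\<in>K. supp V n k \<subseteq> U" using K(3) by (auto simp: U_def)
  moreover have "supp V n k \<inter> ({..<n} - U) = supp V n k - U" for k by (auto simp: supp_def)
  with two_outside have "\<forall>k\<in>{..<p} - K. 2 \<le> card (supp V n k \<inter> ({..<n} - U))"
    by (simp add: U_def)
  ultimately show ?thesis using K(1) by blast
qed

lemma dominions_iff_partition:
  assumes rows: "\<forall>i<n. \<exists>k<p. V i k \<noteq> -\<infinity>"
    and cols: "\<forall>k<p. \<exists>i<n. V i k \<noteq> -\<infinity>"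
  shows "(\<exists>I J. min_dominion V n p I \<and> max_dominion V n p J \<and> I \<inter> J = {})
    \<longleftrightarrow> (\<exists>I J. I \<noteq> {} \<and> J \<noteq> {} \<and> I \<union> J = {..<n} \<and> I \<inter> J = {} \<and>
           (\<exists>K\<subseteq>{..<p}. K \<noteq> {} \<and> (\<forall>k\<in>K. supp V n k \<subseteq> I) \<and>
              (\<forall>k\<in>{..<p} - K. 2 \<le> card (supp V n k \<inter> J))))"
proof
  assume "\<exists>I J. min_dominion V n p I \<and> max_dominion V n p J \<and> I \<inter> J = {}"
  then obtain I J where "min_dominion V n p I" "max_dominion V n p J" "I \<inter> J = {}"
    by blast
  then show "\<exists>I J. I \<noteq> {} \<and> J \<noteq> {} \<and> I \<union> J = {..<n} \<and> I \<inter> J = {} \<and>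
      (\<exists>K\<subseteq>{..<p}. K \<noteq> {} \<and> (\<forall>k\<in>K. supp V n k \<subseteq> I) \<and>
         (\<forall>k\<in>{..<p} - K. 2 \<le> card (supp V n k \<inter> J)))"
    by (rule dominions_imp_partition)
next
  assume "\<exists>I J. I \<noteq> {} \<and> J \<noteq> {} \<and> I \<union> J = {..<n} \<and> I \<inter> J = {} \<and>
      (\<exists>K\<subseteq>{..<p}. K \<noteq> {} \<and> (\<forall>k\<in>K. supp V n k \<subseteq> I) \<and>
         (\<forall>k\<in>{..<p} - K. 2 \<le> card (supp V n k \<inter> J)))"
  then obtain I J K where partition: "J \<noteq> {}" "I \<union> J = {..<n}" "I \<inter> J = {}"
      and K: "K \<subseteq> {..<p}" "K \<noteq> {}"
      and columns: "\<forall>k\<in>K. supp V n k \<subseteq> I" "\<forall>k\<in>{..<p} - K. 2 \<le> card (supp V n k \<inter> J)"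
    by blast
  note column_set = partition_imp_column_set[OF rows partition columns]
  from column_set_dominions[OF K(1) column_set(1) column_cover_nonempty[OF cols K] column_set(2)]
  show "\<exists>I J. min_dominion V n p I \<and> max_dominion V n p J \<and> I \<inter> J = {}"
    by blast
qed

lemma partition_iff_column_set:
  assumes rows: "\<forall>i<n. \<exists>k<p. V i k \<noteq> -\<infinity>"
    and cols: "\<forall>k<p. \<exists>i<n. V i k \<noteq> -\<infinity>"
  shows "(\<exists>I J. I \<noteq> {} \<and> J \<noteq> {} \<and> I \<union> J = {..<n} \<and> I \<inter> J = {} \<and>
           (\<exists>K\<subseteq>{..<p}. K \<noteq> {} \<and> (\<forall>k\<in>K. supp V n k \<subseteq> I) \<and>
              (\<forall>k\<in>{..<p} - K. 2 \<le> card (supp V n k \<inter> J))))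
    \<longleftrightarrow> (\<exists>K\<subseteq>{..<p}. K \<noteq> {} \<and> K \<noteq> {..<p} \<and>
           (\<forall>k\<in>{..<p} - K. 2 \<le> card (supp V n k - (\<Union>k'\<in>K. supp V n k'))))"
proof
  assume "\<exists>I J. I \<noteq> {} \<and> J \<noteq> {} \<and> I \<union> J = {..<n} \<and> I \<inter> J = {} \<and>
      (\<exists>K\<subseteq>{..<p}. K \<noteq> {} \<and> (\<forall>k\<in>K. supp V n k \<subseteq> I) \<and>
         (\<forall>k\<in>{..<p} - K. 2 \<le> card (supp V n k \<inter> J)))"
  then obtain I J K where partition: "J \<noteq> {}" "I \<union> J = {..<n}" "I \<inter> J = {}"
      and K: "K \<subseteq> {..<p}" "K \<noteq> {}"
      and columns: "\<forall>k\<in>K. supp V n k \<subseteq> I" "\<forall>k\<in>{..<p} - K. 2 \<le> card (supp V n k \<inter> J)"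
    by blast
  with partition_imp_column_set[OF rows partition columns]
  show "\<exists>K\<subseteq>{..<p}. K \<noteq> {} \<and> K \<noteq> {..<p} \<and>
      (\<forall>k\<in>{..<p} - K. 2 \<le> card (supp V n k - (\<Union>k'\<in>K. supp V n k')))"
    by blast
next
  assume "\<exists>K\<subseteq>{..<p}. K \<noteq> {} \<and> K \<noteq> {..<p} \<and>
      (\<forall>k\<in>{..<p} - K. 2 \<le> card (supp V n k - (\<Union>k'\<in>K. supp V n k')))"
  then obtain K where K: "K \<subseteq> {..<p}" "K \<noteq> {}" "K \<noteq> {..<p}"
      and two_outside: "\<forall>k\<in>{..<p} - K. 2 \<le> card (supp V n k - (\<Union>k'\<in>K. supp V n k'))"
    by blast
  from column_set_imp_partition[OF K(1,3) column_cover_nonempty[OF cols K(1,2)] two_outside]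
  show "\<exists>I J. I \<noteq> {} \<and> J \<noteq> {} \<and> I \<union> J = {..<n} \<and> I \<inter> J = {} \<and>
      (\<exists>K\<subseteq>{..<p}. K \<noteq> {} \<and> (\<forall>k\<in>K. supp V n k \<subseteq> I) \<and>
         (\<forall>k\<in>{..<p} - K. 2 \<le> card (supp V n k \<inter> J)))" .
qed

theorem propositionA2:
  fixes V :: "nat \<Rightarrow> nat \<Rightarrow> ereal" and n p :: nat
  assumes no_pinf: "\<forall>i<n. \<forall>k<p. V i k \<noteq> \<infinity>"
    and rows: "\<forall>i<n. \<exists>k<p. V i k \<noteq> -\<infinity>"
    and cols: "\<forall>k<p. \<exists>i<n. V i k \<noteq> -\<infinity>"
    and two: "\<forall>k<p. 2 \<le> card (supp V n k)"
  shows "((\<exists>I J. min_dominion V n p I \<and> max_dominion V n p J \<and> I \<inter> J = {})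
          \<longleftrightarrow> (\<exists>I J. I \<noteq> {} \<and> J \<noteq> {} \<and> I \<union> J = {..<n} \<and> I \<inter> J = {} \<and>
                (\<exists>K\<subseteq>{..<p}. K \<noteq> {} \<and> (\<forall>k\<in>K. supp V n k \<subseteq> I) \<and>
                   (\<forall>k\<in>{..<p} - K. 2 \<le> card (supp V n k \<inter> J)))))
       \<and> ((\<exists>I J. I \<noteq> {} \<and> J \<noteq> {} \<and> I \<union> J = {..<n} \<and> I \<inter> J = {} \<and>
                (\<exists>K\<subseteq>{..<p}. K \<noteq> {} \<and> (\<forall>k\<in>K. supp V n k \<subseteq> I) \<and>
                   (\<forall>k\<in>{..<p} - K. 2 \<le> card (supp V n k \<inter> J))))
          \<longleftrightarrow> (\<exists>K\<subseteq>{..<p}. K \<noteq> {} \<and> K \<noteq> {..<p} \<and>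
                (\<forall>k\<in>{..<p} - K. 2 \<le> card (supp V n k - (\<Union>k'\<in>K. supp V n k')))))
       \<and> (\<forall>K\<subseteq>{..<p}. K \<noteq> {} \<and> K \<noteq> {..<p} \<and>
                (\<forall>k\<in>{..<p} - K. 2 \<le> card (supp V n k - (\<Union>k'\<in>K. supp V n k')))
            \<longrightarrow> min_dominion V n p (\<Union>k\<in>K. supp V n k)
                \<and> max_dominion V n p ({..<n} - (\<Union>k\<in>K. supp V n k)))"
proof -
  have "\<forall>K\<subseteq>{..<p}. K \<noteq> {} \<and> K \<noteq> {..<p} \<and>
      (\<forall>k\<in>{..<p} - K. 2 \<le> card (supp V n k - (\<Union>k'\<in>K. supp V n k')))
    \<longrightarrow> min_dominion V n p (\<Union>k\<in>K. supp V n k) \<and> max_dominion V n p ({..<n} - (\<Union>k\<in>K. supp V n k))"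
  proof (intro allI impI, elim conjE)
    fix K assume K: "K \<subseteq> {..<p}" "K \<noteq> {}" "K \<noteq> {..<p}"
      and two_outside: "\<forall>k\<in>{..<p} - K. 2 \<le> card (supp V n k - (\<Union>k'\<in>K. supp V n k'))"
    show "min_dominion V n p (\<Union>k\<in>K. supp V n k) \<and> max_dominion V n p ({..<n} - (\<Union>k\<in>K. supp V n k))"
      using column_set_dominions[OF K(1,3) column_cover_nonempty[OF cols K(1,2)] two_outside] ..
  qed
  then show ?thesis
    by (simp only: dominions_iff_partition[OF rows cols] partition_iff_column_set[OF rows cols])
qed

end
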